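(* Let $n$ be a positive integer and $k$ an integer with $0\le k\le n$. Then $$e_k\left(\left\{\sin^2\left(\tfrac{(2j-1)\pi}{4n+2}\right) : j=1,\dots,n\right\}\right) = \frac{4^{-k}(2n-k)!}{(2n-2k)!\,k!}.$$
   Context: $e_k(\alpha_1,\dots,\alpha_n)$ denotes the degree-$k$ elementary symmetric function of $\alpha_1,\dots,\alpha_n$ (with $e_0=1$). *)

theory Defs
  imports Complex_Main
begin

definition esym :: "nat \<Rightarrow> 'i set \<Rightarrow> ('i \<Rightarrow> 'a::comm_semiring_1) \<Rightarrow> 'a" where
  "esym k I x = (\<Sum>S\<in>{S. S \<subseteq> I \<and> card S = k}. \<Prod>i\<in>S. x i)"

end

theory Submission
  imports Defs "HOL-Computational_Algebra.Polynomial"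
begin

text \<open>Put \<open>\<theta>\<^sub>j = (2j-1)\<pi>/(4n+2)\<close> and \<open>x\<^sub>j = \<pi>/2 - \<theta>\<^sub>j = (n+1-j)\<pi>/(2n+1)\<close>. The quotient
  \<open>sin ((2n+1)x) / sin x = U\<^sub>2\<^sub>n(cos x) = \<Sum>i\<le>n. (-1)^i C(2n-i,i) (2 cos x)^(2n-2i)\<close>
  is a monic polynomial of degree \<open>n\<close> in \<open>4 cos\<^sup>2 x\<close>, and it vanishes at the \<open>n\<close> distinct
  points \<open>x\<^sub>j\<close>. So its roots are the numbers \<open>4 cos\<^sup>2 x\<^sub>j = 4 sin\<^sup>2 \<theta>\<^sub>j\<close>, and Vieta's
  formulas give \<open>e\<^sub>k(4 sin\<^sup>2 \<theta>\<^sub>j) = C(2n-k,k)\<close>.\<close>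

lemma esym_cmult:
  fixes x :: "'i \<Rightarrow> 'a::comm_semiring_1"
  shows "esym k I (\<lambda>i. c * x i) = c^k * esym k I x"
  unfolding esym_def sum_distrib_left by (rule sum.cong) (auto simp: prod.distrib)

lemma coeff_prod_linear_factors:
  fixes x :: "'i \<Rightarrow> 'a::comm_ring_1"
  assumes "finite I" "k \<le> card I"
  shows "coeff (\<Prod>i\<in>I. [:-x i, 1:]) (card I - k) = (-1)^k * esym k I x"
proof -
  have "(\<Prod>i\<in>I. [:-x i, 1:]) = (\<Prod>i\<in>I. [:-x i:] + [:0, 1:])"
    by (intro prod.cong) auto
  also have "\<dots> = (\<Sum>B\<in>Pow I. (\<Prod>i\<in>B. [:-x i:]) * (\<Prod>i\<in>I-B. [:0, 1:]))"
    by (rule prod_add[OF assms(1)])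
  also have "\<dots> = (\<Sum>B\<in>Pow I. monom (\<Prod>i\<in>B. -x i) (card I - card B))"
  proof (rule sum.cong)
    fix B assume "B \<in> Pow I"
    then have "card (I - B) = card I - card B"
      using assms(1) by (auto intro: card_Diff_subset finite_subset)
    then show "(\<Prod>i\<in>B. [:-x i:]) * (\<Prod>i\<in>I-B. [:0, 1:]) = monom (\<Prod>i\<in>B. -x i) (card I - card B)"
      by (simp add: prod_to_poly monom_altdef)
  qed simp
  finally have expansion: "(\<Prod>i\<in>I. [:-x i, 1:])
      = (\<Sum>B\<in>Pow I. monom (\<Prod>i\<in>B. -x i) (card I - card B))" .
  have "coeff (\<Prod>i\<in>I. [:-x i, 1:]) (card I - k)
      = (\<Sum>B\<in>Pow I. if card B = k then (\<Prod>i\<in>B. -x i) else 0)"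
    unfolding expansion coeff_sum
  proof (rule sum.cong)
    fix B assume "B \<in> Pow I"
    then have "card B \<le> card I" using assms(1) by (auto intro: card_mono)
    then show "coeff (monom (\<Prod>i\<in>B. -x i) (card I - card B)) (card I - k)
        = (if card B = k then \<Prod>i\<in>B. -x i else 0)"
      using assms(2) by auto
  qed simp
  also have "\<dots> = (\<Sum>B | B \<subseteq> I \<and> card B = k. (-1)^k * (\<Prod>i\<in>B. x i))"
    using assms(1) by (subst sum.inter_filter[symmetric]) (auto intro!: sum.cong simp: prod_uminus)
  finally show ?thesis unfolding esym_def by (simp add: sum_distrib_left)
qed

lemma monic_poly_eq_prod_roots:
  fixes q :: "'a::idom poly"
  assumes "finite A" "card A = degree q" "lead_coeff q = 1" "\<And>a. a \<in> A \<Longrightarrow> poly q a = 0"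
  shows "q = (\<Prod>a\<in>A. [:-a, 1:])"
  using assms
proof (induction A arbitrary: q rule: finite_induct)
  case empty
  then have "q = [:coeff q 0:]" by (metis degree_0_id card.empty)
  with empty show ?case by simp
next
  case (insert a A)
  obtain r where r: "q = [:-a, 1:] * r"
    using insert.prems(3) poly_eq_0_iff_dvd by (metis dvdE insertI1)
  have "r \<noteq> 0" using r insert.prems by auto
  have "degree q = degree [:-a, 1:] + degree r"
    unfolding r by (rule degree_mult_eq) (use \<open>r \<noteq> 0\<close> in auto)
  moreover have "lead_coeff q = lead_coeff [:-a, 1:] * lead_coeff r"
    unfolding r by (rule lead_coeff_mult)
  ultimately have "card A = degree r" "lead_coeff r = 1"
    using insert.hyps insert.prems by auto
  moreover have "poly r b = 0" if "b \<in> A" for b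
  proof -
    have "b \<noteq> a" "poly q b = 0" using insert that by auto
    then show ?thesis using r by simp
  qed
  ultimately have "r = (\<Prod>a\<in>A. [:-a, 1:])" using insert.IH by blast
  then show ?case using r insert by simp
qed

text \<open>\<open>chebU N c\<close> is \<open>U\<^sub>N(c/2)\<close>, the Chebyshev polynomial of the second kind, in its
  explicit form.\<close>

definition chebU :: "nat \<Rightarrow> real \<Rightarrow> real" where
  "chebU N c = (\<Sum>k\<le>N. (-1)^k * real ((N - k) choose k) * c^(N - 2*k))"

lemma chebU_Suc_Suc: "chebU (Suc (Suc N)) c = c * chebU (Suc N) c - chebU N c"
proof -
  have pascal: "(Suc (Suc N) - k) choose k
      = ((Suc N - k) choose k) + (if k = 0 then 0 else (Suc N - k) choose (k - 1))" for k
    by (cases k; cases "k \<le> Suc N") (auto simp: Suc_diff_le)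
  have shift: "real ((Suc N - k) choose k) * c^(Suc (Suc N) - 2*k)
      = c * (real ((Suc N - k) choose k) * c^(Suc N - 2*k))" for k
    by (cases "2*k \<le> Suc N") (auto simp: Suc_diff_le binomial_eq_0_iff)
  have "chebU (Suc (Suc N)) c
      = (\<Sum>k\<le>Suc (Suc N). (-1)^k * real ((Suc N - k) choose k) * c^(Suc (Suc N) - 2*k))
      + (\<Sum>k\<le>Suc (Suc N). if k = 0 then 0
           else (-1)^k * real ((Suc N - k) choose (k - 1)) * c^(Suc (Suc N) - 2*k))"
    unfolding chebU_def sum.distrib[symmetric] by (rule sum.cong) (auto simp: pascal algebra_simps)
  also have "(\<Sum>k\<le>Suc (Suc N). (-1)^k * real ((Suc N - k) choose k) * c^(Suc (Suc N) - 2*k))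
      = c * chebU (Suc N) c"
    unfolding chebU_def sum_distrib_left
    by (subst sum.atMost_Suc) (auto intro!: sum.cong simp: shift mult.left_commute)
  also have "(\<Sum>k\<le>Suc (Suc N). if k = 0 then 0
           else (-1)^k * real ((Suc N - k) choose (k - 1)) * c^(Suc (Suc N) - 2*k))
      = - chebU N c"
    unfolding chebU_def by (subst sum.atMost_Suc_shift) (simp add: sum_negf[symmetric])
  finally show ?thesis by simp
qed

lemma sin_Suc_mult_eq_chebU: "sin (real (Suc N) * x) = sin x * chebU N (2 * cos x)"
proof (induction N rule: induct_nat_012)
  case 0
  show ?case by (simp add: chebU_def)
next
  case 1
  show ?case by (simp add: chebU_def sin_double)
next
  case (ge2 N)
  have "sin (real (Suc (Suc (Suc N))) * x)
      = 2 * cos x * sin (real (Suc (Suc N)) * x) - sin (real (Suc N) * x)"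
    using sin_add[of "real (Suc (Suc N)) * x" x] sin_diff[of "real (Suc (Suc N)) * x" x]
    by (simp add: algebra_simps)
  then show ?case using ge2 by (simp add: chebU_Suc_Suc algebra_simps)
qed

definition chebU_even_poly :: "nat \<Rightarrow> real poly" where
  "chebU_even_poly n = (\<Sum>i\<le>n. monom ((-1)^i * real ((2*n - i) choose i)) (n - i))"

lemma coeff_chebU_even_poly:
  "coeff (chebU_even_poly n) m = (if m \<le> n then (-1)^(n - m) * real ((n + m) choose (n - m)) else 0)"
proof -
  have "coeff (chebU_even_poly n) m
      = (\<Sum>i\<le>n. if i = n - m \<and> m \<le> n then (-1)^i * real ((2*n - i) choose i) else 0)"
    unfolding chebU_even_poly_def coeff_sum by (intro sum.cong) auto
  also have "\<dots> = (if m \<le> n then (-1)^(n - m) * real ((n + m) choose (n - m)) else 0)"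
    by (auto simp: sum.delta)
  finally show ?thesis .
qed

lemma degree_chebU_even_poly: "degree (chebU_even_poly n) = n"
  by (rule antisym) (auto intro: degree_le le_degree simp: coeff_chebU_even_poly)

lemma lead_coeff_chebU_even_poly: "lead_coeff (chebU_even_poly n) = 1"
  by (simp add: degree_chebU_even_poly coeff_chebU_even_poly)

lemma poly_chebU_even_poly: "poly (chebU_even_poly n) (c^2) = chebU (2*n) c"
proof -
  have "chebU (2*n) c = (\<Sum>i\<le>n. (-1)^i * real ((2*n - i) choose i) * c^(2*n - 2*i))"
    unfolding chebU_def by (rule sum.mono_neutral_right) (auto intro!: binomial_eq_0)
  also have "\<dots> = poly (chebU_even_poly n) (c^2)"
    unfolding chebU_even_poly_def poly_sum poly_monom
    by (intro sum.cong) (auto simp: power_mult[symmetric] diff_mult_distrib2)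
  finally show ?thesis ..
qed

lemma chebU_even_poly_root:
  assumes "sin x \<noteq> 0" "sin (real (2*n + 1) * x) = 0"
  shows "poly (chebU_even_poly n) ((2 * cos x)^2) = 0"
proof -
  have "chebU (2*n) (2 * cos x) = 0" using assms sin_Suc_mult_eq_chebU[of "2*n" x] by simp
  then show ?thesis by (simp only: poly_chebU_even_poly)
qed

lemma odd_angle_bounds:
  assumes "j \<in> {1..n}"
  shows "0 < (2 * real j - 1) * pi / (4 * real n + 2)"
    and "(2 * real j - 1) * pi / (4 * real n + 2) < pi / 2"
proof -
  show "0 < (2 * real j - 1) * pi / (4 * real n + 2)"
    using assms by auto
  have "(2 * real j - 1) * pi < (2 * real n + 1) * pi"
    using assms by (intro mult_strict_right_mono) auto
  then show "(2 * real j - 1) * pi / (4 * real n + 2) < pi / 2"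
    by (simp add: divide_less_eq algebra_simps)
qed

lemma inj_on_sin_odd_angle_squared:
  "inj_on (\<lambda>j. (sin ((2 * real j - 1) * pi / (4 * real n + 2)))^2) {1..n}"
proof (rule inj_onI)
  fix i j :: nat
  define \<theta> where "\<theta> m = (2 * real m - 1) * pi / (4 * real n + 2)" for m :: nat
  assume "i \<in> {1..n}" "j \<in> {1..n}"
  then have bounds: "0 < \<theta> i" "\<theta> i < pi/2" "0 < \<theta> j" "\<theta> j < pi/2"
    unfolding \<theta>_def using odd_angle_bounds by auto
  assume "(sin ((2 * real i - 1) * pi / (4 * real n + 2)))^2
      = (sin ((2 * real j - 1) * pi / (4 * real n + 2)))^2"
  moreover have "0 < sin (\<theta> i)" "0 < sin (\<theta> j)"
    using bounds by (auto intro!: sin_gt_zero)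
  ultimately have "sin (\<theta> i) = sin (\<theta> j)"
    unfolding \<theta>_def by (simp add: power2_eq_iff_nonneg)
  then have "\<theta> i = \<theta> j"
    using bounds sin_inj_pi[of "\<theta> i" "\<theta> j"] by linarith
  then have "2 * real i - 1 = 2 * real j - 1"
    unfolding \<theta>_def by (simp add: add_pos_pos)
  then show "i = j" by simp
qed

lemma chebU_even_poly_root_sin_odd_angle:
  assumes "j \<in> {1..n}"
  shows "poly (chebU_even_poly n) (4 * (sin ((2 * real j - 1) * pi / (4 * real n + 2)))^2) = 0"
proof -
  define \<theta> where "\<theta> = (2 * real j - 1) * pi / (4 * real n + 2)"
  define x where "x = pi/2 - \<theta>"
  have "0 < \<theta>" "\<theta> < pi/2" unfolding \<theta>_def using assms odd_angle_bounds by auto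
  then have "0 < x" "x < pi" unfolding x_def by linarith+
  then have "sin x \<noteq> 0" using sin_gt_zero by fastforce
  moreover have "real (2*n + 1) * x = real (n + 1 - j) * pi"
    unfolding x_def \<theta>_def using assms by (simp add: of_nat_diff field_simps)
  then have "sin (real (2*n + 1) * x) = 0" by (simp only: sin_npi)
  moreover have "4 * (sin \<theta>)^2 = (2 * cos x)^2"
    unfolding x_def by (simp add: cos_diff power_mult_distrib)
  ultimately show ?thesis unfolding \<theta>_def using chebU_even_poly_root by simp
qed

lemma chebU_even_poly_eq_prod:
  "chebU_even_poly n = (\<Prod>j\<in>{1..n}. [:- 4 * (sin ((2 * real j - 1) * pi / (4 * real n + 2)))^2, 1:])"
proof -
  define s where "s = (\<lambda>j. (sin ((2 * real j - 1) * pi / (4 * real n + 2)))^2)"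
  have "inj_on s {1..n}" unfolding s_def by (rule inj_on_sin_odd_angle_squared)
  then have inj: "inj_on (\<lambda>j. 4 * s j) {1..n}"
    using inj_on_mult[of "4::real" "s ` {1..n}"] by (simp add: comp_inj_on[of s, unfolded comp_def])
  have roots: "poly (chebU_even_poly n) (4 * s j) = 0" if "j \<in> {1..n}" for j
    unfolding s_def using that by (rule chebU_even_poly_root_sin_odd_angle)
  have "chebU_even_poly n = (\<Prod>a\<in>(\<lambda>j. 4 * s j) ` {1..n}. [:-a, 1:])"
  proof (rule monic_poly_eq_prod_roots)
    show "card ((\<lambda>j. 4 * s j) ` {1..n}) = degree (chebU_even_poly n)"
      using inj by (simp add: card_image degree_chebU_even_poly)
  qed (auto simp: lead_coeff_chebU_even_poly roots)
  also have "\<dots> = (\<Prod>j\<in>{1..n}. [:- 4 * s j, 1:])"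
    using inj by (simp add: prod.reindex)
  finally show ?thesis unfolding s_def .
qed

lemma esym_sin_odd_angle_squared:
  assumes "k \<le> n"
  shows "esym k {1..n} (\<lambda>j. (sin ((2 * real j - 1) * pi / (4 * real n + 2)))^2)
    = (1/4)^k * real ((2*n - k) choose k)"
proof -
  define s where "s j = (sin ((2 * real j - 1) * pi / (4 * real n + 2)))^2" for j :: nat
  have "(-1)^k * esym k {1..n} (\<lambda>j. 4 * s j) = coeff (chebU_even_poly n) (n - k)"
    using coeff_prod_linear_factors[of "{1..n}" k "\<lambda>j. 4 * s j"] assms
    by (simp add: chebU_even_poly_eq_prod s_def)
  also have "\<dots> = (-1)^k * real ((2*n - k) choose k)"
    using assms by (simp add: coeff_chebU_even_poly mult_2)
  finally have "4^k * esym k {1..n} s = real ((2*n - k) choose k)"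
    by (simp add: esym_cmult)
  then show ?thesis unfolding s_def by (simp add: power_one_over field_simps)
qed

theorem mainTheorem10:
  fixes n k :: nat
  assumes "n \<ge> 1" and "k \<le> n"
  shows "esym k {1..n} (\<lambda>j. (sin ((2 * real j - 1) * pi / (4 * real n + 2)))^2)
    = (1/4)^k * fact (2*n - k) / (fact (2*n - 2*k) * fact k)"
proof -
  have "k \<le> 2*n - k" "2*n - k - k = 2*n - 2*k" using assms(2) by auto
  then have "real ((2*n - k) choose k) = fact (2*n - k) / (fact (2*n - 2*k) * fact k)"
    using binomial_fact[of k "2*n - k", where 'a = real] by (simp add: mult.commute)
  then show ?thesis using esym_sin_odd_angle_squared[OF assms(2)] by simp
qed

end
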